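(* Let $\mathcal{A}=(a_i)_{i=1}^\infty$ be a weakly increasing sequence of positive integers, $r$ a positive integer and $k>2r$. Suppose that $\gcd A=1$ for all $(k-2r)$-multisubsets $A$ of $\{a_1,\ldots,a_k\}$. Then the sequence $(p_\mathcal{A}(n,k))_{n\ge0}$ is asymptotically $r$-log-concave.
   Context: The restricted partition function $p_\mathcal{A}(n,k)$ is defined by $\sum_{n\ge0}p_\mathcal{A}(n,k)x^n=\prod_{i=1}^k(1-x^{a_i})^{-1}$ (partitions of $n$ with parts in the multiset $\{a_1,\ldots,a_k\}$, equal values with different indices counting as distinct colors). A $j$-multisubset of $\{a_1,\ldots,a_k\}$ is a sub-multiset obtained by choosing $j$ of the $k$ indices. For a real sequence $\omega=(w_i)_{i\ge0}$ define $\widehat{\mathcal L}\omega=(w_{i+1}^2-w_iw_{i+2})_{i\ge0}$ and $\widehat{\mathcal L}^j\omega=\widehat{\mathcal L}(\widehat{\mathcal L}^{j-1}\omega)$. The sequence $\omega$ is asymptotically $r$-log-concave if there is $N$ such that $(\widehat{\mathcal L}^j\omega)_i>0$ for all $j\in\{1,\ldots,r\}$ and all $i\geq N$. *)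

theory Defs
  imports "HOL-Computational_Algebra.Formal_Power_Series"
begin

definition p_A :: "(nat \<Rightarrow> nat) \<Rightarrow> nat \<Rightarrow> nat \<Rightarrow> real" where
  "p_A a k n = fps_nth (\<Prod>i\<in>{1..k}. inverse (1 - fps_X ^ a i) :: real fps) n"

definition L_hat :: "(nat \<Rightarrow> real) \<Rightarrow> (nat \<Rightarrow> real)" where
  "L_hat w = (\<lambda>i. (w (i+1))^2 - w i * w (i+2))"

definition asymp_r_log_concave :: "nat \<Rightarrow> (nat \<Rightarrow> real) \<Rightarrow> bool" where
  "asymp_r_log_concave r w \<longleftrightarrow>
     (\<exists>N. \<forall>j\<in>{1..r}. \<forall>i\<ge>N. (L_hat ^^ j) w i > 0)"

end

(*
  The generating function 1 / ((1 - x)^k U(x)), with U = prod_i (1 + x + ... + x^(a_i - 1)), splits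
  by Bezout into A / (1 - x)^k + B / U.  The first part has, for large n, a polynomial of degree k - 1
  with positive leading coefficient as its n-th coefficient.  A root of unity z <> 1 is a root of U of
  multiplicity #{i. z^(a_i) = 1}, which the gcd condition bounds by t - 1 for t = k - 2r.  So U divides
  (1 - x^M)^(t - 1) with M = prod_i a_i, and the coefficients of B / U are O(n^(t - 2)).  Thus
  p_A(n, k) = q(n) + O(n^(deg q - s)) with s = 2r + 1.  Applying L_hat to such an approximation gives
  one by a polynomial of degree 2 deg q - 2 with leading coefficient deg q * lc(q)^2 > 0, and the gap s
  between degree and error exponent drops by 2.  After j <= r steps the gap is still positive, so the
  polynomial dominates and the j-th iterate is eventually positive.
*)

theory Submission
  imports
    Defs
    "HOL-Computational_Algebra.Computational_Algebra"
    "HOL-Computational_Algebra.Field_as_Ring"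
    "HOL-Real_Asymp.Real_Asymp"
begin

section \<open>Forward differences and \<open>L_hat\<close> on polynomials\<close>

definition fdiff_poly :: "'a::comm_ring_1 poly \<Rightarrow> 'a poly" where
  "fdiff_poly p = p \<circ>\<^sub>p [:1, 1:] - p"

lemma coeff_fdiff_poly:
  fixes p :: "'a::comm_ring_1 poly"
  shows "coeff (fdiff_poly p) j =
    (\<Sum>i\<le>degree p. coeff p i * (of_nat (i choose j) - (if i = j then 1 else 0)))"
proof -
  have shift: "monom c i \<circ>\<^sub>p [:1, 1:] = smult c ([:1, 1:] ^ i)" for c :: 'a and i
    by (induction i) (simp_all add: monom_0 monom_Suc pcompose_pCons pcompose_smult)
  have monom_shift: "coeff (monom c i \<circ>\<^sub>p [:1, 1:]) j = c * of_nat (i choose j)" for c :: 'a and i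
  proof (cases "j \<le> i")
    case False
    have "degree ([:1, 1:] ^ i :: 'a poly) \<le> i"
      using degree_power_le[of "[:1, 1:] :: 'a poly" i] by simp
    with False show ?thesis by (simp add: shift coeff_eq_0 binomial_eq_0)
  qed (simp add: shift coeff_linear_poly_power)
  have "coeff (p \<circ>\<^sub>p [:1, 1:]) j = (\<Sum>i\<le>degree p. coeff p i * of_nat (i choose j))"
    by (subst (1) poly_as_sum_of_monoms[symmetric]) (simp add: pcompose_sum coeff_sum monom_shift)
  moreover have "coeff p j = (\<Sum>i\<le>degree p. coeff p i * (if i = j then 1 else 0))"
    by (cases "j \<le> degree p") (auto simp: coeff_eq_0 if_distrib cong: if_cong)
  ultimately show ?thesis
    by (simp add: fdiff_poly_def right_diff_distrib sum_subtractf)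
qed

lemma
  fixes p :: "'a::{idom, ring_char_0} poly"
  assumes "degree p \<ge> 1"
  shows degree_fdiff_poly: "degree (fdiff_poly p) = degree p - 1"
    and lead_coeff_fdiff_poly: "lead_coeff (fdiff_poly p) = of_nat (degree p) * lead_coeff p"
proof -
  define D where "D = degree p"
  have top: "coeff (fdiff_poly p) j = 0" if "j \<ge> D" for j
    unfolding coeff_fdiff_poly
    by (intro sum.neutral) (use that in \<open>auto simp: D_def binomial_eq_0\<close>)
  have "D choose (D - 1) = D"
    using assms binomial_symmetric[of 1 D] by (simp add: D_def)
  then have "coeff (fdiff_poly p) (D - 1) = (\<Sum>i\<in>{D}. coeff p i * (of_nat (i choose (D - 1)) - (if i = D - 1 then 1 else 0)))"
    unfolding coeff_fdiff_poly D_def[symmetric]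
    by (intro sum.mono_neutral_right) (use assms in \<open>auto simp: D_def binomial_eq_0\<close>)
  also have "\<dots> = of_nat D * lead_coeff p"
    using assms \<open>D choose (D - 1) = D\<close> by (simp add: D_def)
  finally have below_top: "coeff (fdiff_poly p) (D - 1) = of_nat D * lead_coeff p" .
  have "p \<noteq> 0"
    using assms by auto
  then have "coeff (fdiff_poly p) (D - 1) \<noteq> 0"
    using below_top assms by (simp add: D_def)
  moreover have "degree (fdiff_poly p) \<le> D - 1"
    by (rule degree_le) (use top assms in \<open>auto simp: D_def\<close>)
  ultimately show deg: "degree (fdiff_poly p) = degree p - 1"
    by (simp add: D_def le_antisym le_degree)
  show "lead_coeff (fdiff_poly p) = of_nat (degree p) * lead_coeff p"
    using below_top by (simp add: deg D_def)
qed

definition L_hat_poly :: "'a::comm_ring_1 poly \<Rightarrow> 'a poly" where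
  "L_hat_poly q = (q \<circ>\<^sub>p [:1, 1:])\<^sup>2 - q * (q \<circ>\<^sub>p [:2, 1:])"

lemma poly_L_hat_poly: "poly (L_hat_poly q) x = (poly q (x + 1))\<^sup>2 - poly q x * poly q (x + 2)"
  by (simp add: L_hat_poly_def poly_pcompose algebra_simps)

lemma L_hat_poly_eq_fdiff_poly:
  "L_hat_poly q = fdiff_poly q * (fdiff_poly q \<circ>\<^sub>p [:1, 1:]) - (q \<circ>\<^sub>p [:1, 1:]) * fdiff_poly (fdiff_poly q)"
proof -
  have "[:1, 1:] \<circ>\<^sub>p [:1, 1:] = ([:2, 1:] :: 'a poly)"
    by (simp add: pcompose_pCons one_add_one)
  then have "q \<circ>\<^sub>p [:2, 1:] = (q \<circ>\<^sub>p [:1, 1:]) \<circ>\<^sub>p [:1, 1:]"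
    by (simp flip: pcompose_assoc)
  then show ?thesis
    by (simp add: L_hat_poly_def fdiff_poly_def pcompose_diff algebra_simps power2_eq_square)
qed

text \<open>The leading coefficients \<open>(D c)\<^sup>2\<close> and \<open>D (D - 1) c\<^sup>2\<close> of the two products do not cancel.\<close>
lemma
  fixes q :: "'a::{idom, ring_char_0} poly"
  assumes "degree q \<ge> 2"
  shows degree_L_hat_poly: "degree (L_hat_poly q) = 2 * degree q - 2"
    and lead_coeff_L_hat_poly: "lead_coeff (L_hat_poly q) = of_nat (degree q) * (lead_coeff q)\<^sup>2"
proof -
  define D where "D = degree q"
  define c where "c = lead_coeff q"
  define q1 where "q1 = q \<circ>\<^sub>p [:1, 1:]"
  have "c \<noteq> 0" using assms by (auto simp: c_def)
  have d1: "degree (fdiff_poly q) = D - 1" "lead_coeff (fdiff_poly q) = of_nat D * c"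
    using assms degree_fdiff_poly[of q] lead_coeff_fdiff_poly[of q] by (simp_all add: D_def c_def)
  have d2: "degree (fdiff_poly (fdiff_poly q)) = D - 2"
    "lead_coeff (fdiff_poly (fdiff_poly q)) = of_nat (D - 1) * (of_nat D * c)"
    using assms d1 degree_fdiff_poly[of "fdiff_poly q"] lead_coeff_fdiff_poly[of "fdiff_poly q"]
    by (simp_all add: D_def)
  have d3: "degree (fdiff_poly q \<circ>\<^sub>p [:1, 1:]) = D - 1"
    "lead_coeff (fdiff_poly q \<circ>\<^sub>p [:1, 1:]) = of_nat D * c"
    using d1 lead_coeff_comp[of "[:1, 1:]" "fdiff_poly q"] by (simp_all add: degree_pcompose)
  have d4: "degree q1 = D" "lead_coeff q1 = c"
    using lead_coeff_comp[of "[:1, 1:]" q] by (simp_all add: q1_def degree_pcompose D_def c_def)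
  define P where "P = fdiff_poly q * (fdiff_poly q \<circ>\<^sub>p [:1, 1:])"
  define R where "R = q1 * fdiff_poly (fdiff_poly q)"
  have P: "degree P \<le> 2 * D - 2" "coeff P (2 * D - 2) = (of_nat D * c)\<^sup>2"
    using coeff_mult_degree_sum[of "fdiff_poly q" "fdiff_poly q \<circ>\<^sub>p [:1, 1:]"]
      degree_mult_le[of "fdiff_poly q" "fdiff_poly q \<circ>\<^sub>p [:1, 1:]"] d1 d3 assms
    by (auto simp: P_def D_def power2_eq_square mult_2 numeral_2_eq_2)
  have R: "degree R \<le> 2 * D - 2" "coeff R (2 * D - 2) = c * (of_nat (D - 1) * (of_nat D * c))"
    using coeff_mult_degree_sum[of q1 "fdiff_poly (fdiff_poly q)"]
      degree_mult_le[of q1 "fdiff_poly (fdiff_poly q)"] d2 d4 assms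
    by (auto simp: R_def D_def mult_2 numeral_2_eq_2)
  have L: "L_hat_poly q = P - R"
    by (simp add: L_hat_poly_eq_fdiff_poly P_def R_def q1_def)
  have top: "coeff (L_hat_poly q) (2 * D - 2) = of_nat D * c\<^sup>2"
    using assms unfolding L coeff_diff P(2) R(2)
    by (simp add: of_nat_diff D_def power2_eq_square algebra_simps)
  have "degree (L_hat_poly q) \<le> 2 * D - 2"
    unfolding L using degree_diff_le P(1) R(1) by blast
  moreover have "coeff (L_hat_poly q) (2 * D - 2) \<noteq> 0"
    using top assms \<open>c \<noteq> 0\<close> by (simp add: D_def)
  ultimately show deg: "degree (L_hat_poly q) = 2 * degree q - 2"
    by (simp add: D_def le_antisym le_degree)
  show "lead_coeff (L_hat_poly q) = of_nat (degree q) * (lead_coeff q)\<^sup>2"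
    using top by (simp add: deg D_def c_def)
qed

section \<open>Sequences approximated by polynomials\<close>

definition poly_approx :: "(nat \<Rightarrow> real) \<Rightarrow> real poly \<Rightarrow> real \<Rightarrow> bool" where
  "poly_approx w q e \<longleftrightarrow> (\<lambda>n. w n - poly q (real n)) \<in> O(\<lambda>n. real n powr e)"

lemma real_powr_bigo_mono: "e1 \<le> e2 \<Longrightarrow> (\<lambda>n. real n powr e1) \<in> O(\<lambda>n. real n powr e2)"
  using powr_bigo_iff[OF filterlim_real_sequentially, of e1 e2] by simp

lemma real_powr_smallo_mono: "e1 < e2 \<Longrightarrow> (\<lambda>n. real n powr e1) \<in> o(\<lambda>n. real n powr e2)"
  using powr_smallo_iff[OF filterlim_real_sequentially, of e1 e2] by simp

lemma poly_in_bigo_powr: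
  assumes "degree q \<le> m"
  shows "(\<lambda>n. poly q (real n)) \<in> O(\<lambda>n. real n powr real m)"
proof (rule bigoI[where c = "\<Sum>i\<le>degree q. \<bar>coeff q i\<bar>"])
  show "\<forall>\<^sub>F n in sequentially. norm (poly q (real n)) \<le> (\<Sum>i\<le>degree q. \<bar>coeff q i\<bar>) * norm (real n powr real m)"
    using eventually_ge_at_top[of "1::nat"]
  proof eventually_elim
    case (elim n)
    have "norm (poly q (real n)) \<le> (\<Sum>i\<le>degree q. \<bar>coeff q i * real n ^ i\<bar>)"
      unfolding poly_altdef real_norm_def by (rule sum_abs)
    also have "\<dots> \<le> (\<Sum>i\<le>degree q. \<bar>coeff q i\<bar> * real n ^ m)"
      using elim assms by (intro sum_mono) (auto simp: abs_mult intro!: mult_left_mono power_increasing)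
    also have "\<dots> = (\<Sum>i\<le>degree q. \<bar>coeff q i\<bar>) * norm (real n powr real m)"
      using elim by (simp add: sum_distrib_right powr_realpow)
    finally show ?case .
  qed
qed

lemma bigo_powr_shift:
  assumes "f \<in> O(\<lambda>n. real n powr e)"
  shows "(\<lambda>n. f (n + j)) \<in> O(\<lambda>n. real n powr e)"
proof -
  have "(\<lambda>n. f (n + j)) \<in> O(\<lambda>n. real (n + j) powr e)"
    using landau_o.big.compose[OF assms filterlim_add_const_nat_at_top] by simp
  also have "(\<lambda>n. real (n + j) powr e) \<in> O(\<lambda>n. real n powr e)"
    by real_asymp
  finally show ?thesis .
qed

text \<open>Writing \<open>w = q + E\<close>, the error of \<open>L_hat w\<close> consists of products of a shifted \<open>q\<close>
  with a shifted \<open>E\<close>, and of two shifted \<open>E\<close>.\<close>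
lemma poly_approx_L_hat:
  assumes approx: "poly_approx w q e" and e: "e \<le> real (degree q)"
  shows "poly_approx (L_hat w) (L_hat_poly q) (real (degree q) + e)"
proof -
  define D where "D = real (degree q)"
  define Q where "Q = (\<lambda>j n. poly q (real (n + j)))"
  define E where "E = (\<lambda>j n. w (n + j) - Q j n)"
  have E: "E j \<in> O(\<lambda>n. real n powr e)" for j
    using bigo_powr_shift[of "\<lambda>n. w n - poly q (real n)" e j] approx
    by (simp add: poly_approx_def E_def Q_def)
  have Q: "Q j \<in> O(\<lambda>n. real n powr D)" for j
    unfolding Q_def D_def by (rule bigo_powr_shift[OF poly_in_bigo_powr]) simp
  have QE: "(\<lambda>n. Q i n * E j n) \<in> O(\<lambda>n. real n powr (D + e))" for i j
    using landau_o.big.mult[OF Q[of i] E[of j]] by (simp add: powr_add)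
  have EE: "(\<lambda>n. E i n * E j n) \<in> O(\<lambda>n. real n powr (D + e))" for i j
  proof -
    have "(\<lambda>n. E i n * E j n) \<in> O(\<lambda>n. real n powr (e + e))"
      using landau_o.big.mult[OF E[of i] E[of j]] by (simp only: powr_add)
    also have "(\<lambda>n. real n powr (e + e)) \<in> O(\<lambda>n. real n powr (D + e))"
      by (rule real_powr_bigo_mono) (use e in \<open>simp add: D_def\<close>)
    finally show ?thesis .
  qed
  have "L_hat w n - poly (L_hat_poly q) (real n) =
      2 * (Q 1 n * E 1 n) + E 1 n * E 1 n - Q 0 n * E 2 n - Q 2 n * E 0 n - E 0 n * E 2 n" for n
    by (simp add: L_hat_def poly_L_hat_poly E_def Q_def add.commute algebra_simps power2_eq_square)
  then show ?thesis
    unfolding poly_approx_def D_def[symmetric]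
    by (simp only:) (intro sum_in_bigo QE EE landau_o.big.cmult_in_iff[THEN iffD2]; simp)
qed

lemma poly_approx_eventually_pos:
  assumes approx: "poly_approx w q e" and e: "e < real (degree q)"
    and deg: "degree q \<ge> 1" and lead: "lead_coeff q > 0"
  shows "eventually (\<lambda>n. w n > 0) sequentially"
proof -
  define D where "D = degree q"
  define c where "c = lead_coeff q"
  have "degree (q - monom c D) \<le> D - 1"
    by (rule degree_le) (auto simp: c_def D_def coeff_eq_0 coeff_monom)
  from landau_o.big_small_trans[OF poly_in_bigo_powr[OF this] real_powr_smallo_mono]
  have lower: "(\<lambda>n. poly (q - monom c D) (real n)) \<in> o(\<lambda>n. real n powr real D)"
    using deg by (simp add: D_def)
  have "(\<lambda>n. w n - poly q (real n)) \<in> o(\<lambda>n. real n powr real D)"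
    using approx landau_o.big_small_trans real_powr_smallo_mono[OF e]
    by (simp add: poly_approx_def D_def)
  from sum_in_smallo(1)[OF this lower]
  have "(\<lambda>n. w n - c * real n ^ D) \<in> o(\<lambda>n. real n powr real D)"
    by (simp add: poly_monom)
  moreover have "c / 2 > 0" using lead by (simp add: c_def)
  ultimately have "eventually (\<lambda>n. norm (w n - c * real n ^ D) \<le> c / 2 * norm (real n powr real D)) sequentially"
    by (rule landau_o.smallD)
  then show ?thesis
    using eventually_ge_at_top[of "1::nat"]
  proof eventually_elim
    case (elim n)
    have "c * real n ^ D > 0" using elim(2) lead by (simp add: c_def)
    moreover have "\<bar>w n - c * real n ^ D\<bar> \<le> c / 2 * real n ^ D"
      using elim by (simp add: powr_realpow)
    ultimately show ?case
      unfolding abs_le_iff by linarith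
  qed
qed

lemma poly_approx_iterate_L_hat:
  assumes "poly_approx w q (real (degree q) - s)" "degree q \<ge> 2" "lead_coeff q > 0"
    and "2 * real j \<le> s"
  shows "\<exists>q'. poly_approx ((L_hat ^^ j) w) q' (real (degree q') - (s - 2 * real j)) \<and>
    degree q' \<ge> 2 \<and> lead_coeff q' > 0"
  using assms(4)
proof (induction j)
  case 0
  then show ?case using assms(1-3) by auto
next
  case (Suc j)
  then obtain q' where approx: "poly_approx ((L_hat ^^ j) w) q' (real (degree q') - (s - 2 * real j))"
    and deg: "degree q' \<ge> 2" and lead: "lead_coeff q' > 0"
    by auto
  have "poly_approx ((L_hat ^^ Suc j) w) (L_hat_poly q')
      (real (degree q') + (real (degree q') - (s - 2 * real j)))"
    using poly_approx_L_hat[OF approx] Suc.prems by simp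
  moreover have "real (degree q') + (real (degree q') - (s - 2 * real j)) =
      real (degree (L_hat_poly q')) - (s - 2 * real (Suc j))"
    using deg by (simp add: degree_L_hat_poly of_nat_diff)
  moreover have "degree (L_hat_poly q') \<ge> 2"
    using deg by (simp add: degree_L_hat_poly)
  moreover have "lead_coeff (L_hat_poly q') > 0"
    using deg lead by (auto simp: lead_coeff_L_hat_poly intro!: mult_pos_pos)
  ultimately show ?case by metis
qed

lemma asymp_r_log_concave_if_poly_approx:
  assumes "poly_approx w q (real (degree q) - s)" "degree q \<ge> 2" "lead_coeff q > 0"
    and "2 * real r < s"
  shows "asymp_r_log_concave r w"
proof -
  have "eventually (\<lambda>i. (L_hat ^^ j) w i > 0) sequentially" if "j \<in> {1..r}" for j
  proof -
    have "2 * real j < s"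
      using that assms(4) by auto
    then obtain q' where approx: "poly_approx ((L_hat ^^ j) w) q' (real (degree q') - (s - 2 * real j))"
      and "degree q' \<ge> 2" "lead_coeff q' > 0"
      using poly_approx_iterate_L_hat[OF assms(1-3), of j] by auto
    then show ?thesis
      using poly_approx_eventually_pos[OF approx] \<open>2 * real j < s\<close> by simp
  qed
  then have "eventually (\<lambda>i. \<forall>j\<in>{1..r}. (L_hat ^^ j) w i > 0) sequentially"
    by (subst eventually_ball_finite_distrib) auto
  then show ?thesis
    by (auto simp: asymp_r_log_concave_def eventually_sequentially)
qed

section \<open>Partial fractions of the generating function\<close>

definition geom_poly :: "nat \<Rightarrow> 'a::comm_ring_1 poly" where
  "geom_poly m = (\<Sum>j<m. monom 1 j)"

lemma coeff_geom_poly: "coeff (geom_poly m) j = (if j < m then 1 else 0)"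
  by (simp add: geom_poly_def coeff_sum coeff_monom)

lemma one_minus_X_mult_geom_poly: "[:1, -1:] * geom_poly m = 1 - monom 1 m"
proof (induction m)
  case (Suc m)
  have "[:1, -1:] * monom 1 m = (monom 1 m - monom 1 (Suc m) :: 'a poly)"
    by (simp add: monom_Suc algebra_simps)
  then show ?case
    using Suc by (simp add: geom_poly_def distrib_left)
qed (simp add: geom_poly_def)

lemma poly_geom_poly_1: "poly (geom_poly m) 1 = of_nat m"
  by (simp add: geom_poly_def poly_sum poly_monom)

lemma poly_geom_poly_0: "m > 0 \<Longrightarrow> poly (geom_poly m) 0 = 1"
  by (simp add: geom_poly_def poly_sum poly_monom power_0_left sum.delta)

lemma geom_poly_eq_0_iff: "(geom_poly m :: 'a::{comm_ring_1, ring_char_0} poly) = 0 \<longleftrightarrow> m = 0"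
proof
  assume "geom_poly m = (0 :: 'a poly)"
  then have "poly (geom_poly m) 1 = (0 :: 'a)" by simp
  then show "m = 0" by (simp add: poly_geom_poly_1)
qed (simp add: geom_poly_def)

lemma fps_inverse_prod:
  "finite S \<Longrightarrow> inverse (\<Prod>i\<in>S. f i) = (\<Prod>i\<in>S. inverse (f i) :: 'a::field fps)"
  by (induction S rule: finite_induct) (auto simp: fps_inverse_mult)

definition geom_prod_poly :: "(nat \<Rightarrow> nat) \<Rightarrow> nat \<Rightarrow> 'a::comm_ring_1 poly" where
  "geom_prod_poly a k = (\<Prod>i\<in>{1..k}. geom_poly (a i))"

lemma p_A_fps_eq:
  "(\<Prod>i\<in>{1..k}. inverse (1 - fps_X ^ a i) :: real fps) =
    inverse (fps_of_poly ([:1, -1:] ^ k * geom_prod_poly a k))"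
proof -
  have factor: "(1 - fps_X ^ m :: real fps) = fps_of_poly ([:1, -1:] * geom_poly m)" for m
    by (simp only: one_minus_X_mult_geom_poly) (simp add: fps_of_poly_diff fps_of_poly_monom')
  have "(\<Prod>i\<in>{1..k}. [:1, -1:] * geom_poly (a i)) = [:1, -1:] ^ k * (geom_prod_poly a k :: real poly)"
    by (simp only: prod.distrib geom_prod_poly_def prod_constant card_atLeastAtMost diff_Suc_1)
  then have "(\<Prod>i\<in>{1..k}. 1 - fps_X ^ a i :: real fps) = fps_of_poly ([:1, -1:] ^ k * geom_prod_poly a k)"
    by (simp only: factor flip: fps_of_poly_prod)
  then show ?thesis
    by (metis fps_inverse_prod finite_atLeastAtMost)
qed

lemma fps_inverse_partial_fractions:
  fixes A B P U :: "'a::field poly"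
  assumes bezout: "A * U + B * P = 1" and "poly P 0 \<noteq> 0" "poly U 0 \<noteq> 0"
  shows "inverse (fps_of_poly (P * U)) =
    fps_of_poly A * inverse (fps_of_poly P) + fps_of_poly B * inverse (fps_of_poly U)"
proof -
  define Pf Uf where "Pf = fps_of_poly P" and "Uf = fps_of_poly U"
  have "Pf $ 0 \<noteq> 0" "Uf $ 0 \<noteq> 0"
    using assms(2,3) by (simp_all add: Pf_def Uf_def poly_0_coeff_0)
  have "inverse (fps_of_poly (P * U)) = (fps_of_poly A * Uf + fps_of_poly B * Pf) * (inverse Pf * inverse Uf)"
    using arg_cong[OF bezout, of fps_of_poly]
    by (simp add: fps_of_poly_mult fps_of_poly_add fps_inverse_mult Pf_def Uf_def)
  also have "\<dots> = fps_of_poly A * inverse Pf * (Uf * inverse Uf) + fps_of_poly B * inverse Uf * (Pf * inverse Pf)"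
    by (simp add: algebra_simps)
  also have "\<dots> = fps_of_poly A * inverse Pf + fps_of_poly B * inverse Uf"
    using \<open>Pf $ 0 \<noteq> 0\<close> \<open>Uf $ 0 \<noteq> 0\<close> by (simp add: inverse_mult_eq_1')
  finally show ?thesis by (simp add: Pf_def Uf_def)
qed

definition binom_poly :: "nat \<Rightarrow> nat \<Rightarrow> 'a::field_char_0 poly" where
  "binom_poly d i = smult (1 / fact d) (\<Prod>l<d. [:1 + of_nat l - of_nat i, 1:])"

lemma poly_binom_poly:
  assumes "i \<le> n"
  shows "poly (binom_poly d i) (of_nat n) = (of_nat ((n - i + d) choose d) :: 'a::field_char_0)"
proof -
  have "poly (binom_poly d i) (of_nat n) = pochhammer (of_nat (n - i) + 1) d / (fact d :: 'a)"
    using assms by (simp add: binom_poly_def poly_prod pochhammer_prod atLeast0LessThan of_nat_diff algebra_simps)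
  also have "\<dots> = of_nat ((n - i + d) choose d)"
    by (simp add: binomial_gbinomial gbinomial_pochhammer')
  finally show ?thesis .
qed

lemma
  shows degree_binom_poly: "degree (binom_poly d i :: 'a::field_char_0 poly) = d"
    and coeff_binom_poly_top: "coeff (binom_poly d i :: 'a poly) d = 1 / fact d"
proof -
  have "degree (\<Prod>l<d. [:1 + of_nat l - of_nat i, 1:] :: 'a poly) = d"
    by (simp add: degree_prod_eq_sum_degree)
  moreover have "lead_coeff (\<Prod>l<d. [:1 + of_nat l - of_nat i, 1:] :: 'a poly) = 1"
    by (simp add: lead_coeff_prod)
  ultimately show "degree (binom_poly d i :: 'a poly) = d" "coeff (binom_poly d i :: 'a poly) d = 1 / fact d"
    by (simp_all add: binom_poly_def)
qed

lemma fps_div_one_minus_X_power_eventually_poly: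
  fixes A :: "'a::field_char_0 poly"
  assumes "k \<ge> 1"
  obtains q where "degree q \<le> k - 1" "coeff q (k - 1) = poly A 1 / fact (k - 1)"
    and "\<And>n. n \<ge> degree A \<Longrightarrow> (fps_of_poly A * inverse ((1 - fps_X) ^ k)) $ n = poly q (of_nat n)"
proof
  define q where "q = (\<Sum>i\<le>degree A. smult (coeff A i) (binom_poly (k - 1) i) :: 'a poly)"
  show "degree q \<le> k - 1"
    unfolding q_def by (intro degree_sum_le) (auto intro: order.trans[OF degree_smult_le] simp: degree_binom_poly)
  show "coeff q (k - 1) = poly A 1 / fact (k - 1)"
    by (simp add: q_def coeff_sum coeff_binom_poly_top poly_altdef sum_divide_distrib)
  fix n assume n: "n \<ge> degree A"
  have inv: "inverse ((1 - fps_X) ^ k :: 'a fps) = Abs_fps (\<lambda>m. of_nat ((m + (k - 1)) choose (k - 1)))"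
  proof -
    have symm: "(k + m - 1) choose m = (m + (k - 1)) choose (k - 1)" for m
      using assms binomial_symmetric[of m "m + (k - 1)"] by (simp add: add.commute)
    have "inverse ((1 - fps_X) ^ k :: 'a fps) = Abs_fps (\<lambda>m. of_nat ((k + m - 1) choose m))"
      using one_minus_const_fps_X_neg_power'[of k "1::'a"] assms by simp
    then show ?thesis
      by (simp only: symm)
  qed
  have "(fps_of_poly A * inverse ((1 - fps_X) ^ k)) $ n =
      (\<Sum>i=0..n. coeff A i * of_nat ((n - i + (k - 1)) choose (k - 1)))"
    by (simp add: fps_mult_nth inv)
  also have "\<dots> = (\<Sum>i\<le>degree A. coeff A i * of_nat ((n - i + (k - 1)) choose (k - 1)))"
    by (rule sum.mono_neutral_right) (use n in \<open>auto simp: coeff_eq_0\<close>)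
  also have "\<dots> = poly q (of_nat n)"
    using n by (simp add: q_def poly_sum poly_binom_poly)
  finally show "(fps_of_poly A * inverse ((1 - fps_X) ^ k)) $ n = poly q (of_nat n)" .
qed

section \<open>Roots of unity and the error term\<close>

lemma map_poly_of_real_mult:
  "map_poly of_real (p * q) = map_poly of_real p * (map_poly of_real q :: 'a::{real_algebra_1, comm_ring_1} poly)"
  by (rule poly_eqI) (simp add: coeff_map_poly coeff_mult)

lemma map_poly_of_real_add:
  "map_poly of_real (p + q) = map_poly of_real p + (map_poly of_real q :: 'a::{real_algebra_1, comm_ring_1} poly)"
  by (rule poly_eqI) (simp add: coeff_map_poly)

lemma map_poly_of_real_prod:
  "map_poly of_real (\<Prod>i\<in>S. f i) = (\<Prod>i\<in>S. map_poly of_real (f i) :: 'a::{real_algebra_1, comm_ring_1} poly)"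
  by (induction S rule: infinite_finite_induct) (auto simp: map_poly_of_real_mult)

lemma map_poly_of_real_power:
  "map_poly of_real (p ^ n) = (map_poly of_real p ^ n :: 'a::{real_algebra_1, comm_ring_1} poly)"
  by (induction n) (auto simp: map_poly_of_real_mult)

lemma map_poly_of_real_geom_poly:
  "map_poly of_real (geom_poly m) = (geom_poly m :: 'a::{real_algebra_1, comm_ring_1} poly)"
  by (rule poly_eqI) (simp add: coeff_map_poly coeff_geom_poly)

text \<open>The remainder of the real division is also the remainder over the larger field.\<close>
lemma map_poly_of_real_dvd_imp_dvd:
  fixes p q :: "real poly"
  assumes dvd: "map_poly of_real p dvd (map_poly of_real q :: 'a::real_field poly)" and "p \<noteq> 0"
  shows "p dvd q"
proof (rule ccontr)
  define r where "r = q mod p"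
  assume "\<not> p dvd q"
  then have "r \<noteq> 0" by (simp add: r_def mod_eq_0_iff_dvd)
  then have "degree r < degree p"
    using degree_mod_less[OF \<open>p \<noteq> 0\<close>, of q] by (auto simp: r_def)
  have "q = p * (q div p) + r" by (simp add: r_def)
  then have "map_poly of_real q = map_poly of_real p * map_poly of_real (q div p) + (map_poly of_real r :: 'a poly)"
    by (metis map_poly_of_real_mult map_poly_of_real_add)
  with dvd have "map_poly of_real p dvd (map_poly of_real r :: 'a poly)"
    by (metis dvd_add_right_iff dvd_triv_left)
  moreover have "map_poly of_real r \<noteq> (0 :: 'a poly)"
    using \<open>r \<noteq> 0\<close> by (simp add: map_poly_eq_0_iff)
  ultimately have "degree (map_poly of_real p :: 'a poly) \<le> degree (map_poly of_real r :: 'a poly)"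
    by (rule dvd_imp_degree_le)
  with \<open>degree r < degree p\<close> show False
    by (simp add: degree_map_poly)
qed

lemma dvd_if_order_le:
  fixes p q :: "'a::alg_closed_field poly"
  assumes "p \<noteq> 0" "q \<noteq> 0" "\<And>z. order z p \<le> order z q"
  shows "p dvd q"
  using assms
proof (induction "degree p" arbitrary: p q rule: less_induct)
  case less
  show ?case
  proof (cases "degree p = 0")
    case True
    then show ?thesis using less.prems(1) by (simp add: is_unit_iff_degree unit_imp_dvd)
  next
    case False
    then obtain z where "poly p z = 0"
      using alg_closed_imp_poly_has_root by blast
    then obtain p' where p': "p = [:-z, 1:] * p'"
      by (metis dvdE poly_eq_0_iff_dvd)
    have "order z q \<noteq> 0"
      using less.prems(3)[of z] order_root \<open>poly p z = 0\<close> less.prems(1) by (metis le_zero_eq)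
    then obtain q' where q': "q = [:-z, 1:] * q'"
      by (metis dvdE order_root poly_eq_0_iff_dvd)
    have "p' \<noteq> 0" "q' \<noteq> 0" using less.prems p' q' by auto
    have "order w p' \<le> order w q'" for w
      using less.prems(3)[of w] less.prems(1,2) unfolding p' q' by (subst (asm) (1 2) order_mult) auto
    moreover have "degree p' < degree p"
      unfolding p' using \<open>p' \<noteq> 0\<close> by (subst degree_mult_eq) auto
    ultimately have "p' dvd q'"
      using less.hyps \<open>p' \<noteq> 0\<close> \<open>q' \<noteq> 0\<close> by blast
    then show ?thesis unfolding p' q' by (rule mult_dvd_mono[OF dvd_refl])
  qed
qed

lemma order_prod:
  fixes f :: "'b \<Rightarrow> 'a::idom poly"
  assumes "finite S" "\<And>i. i \<in> S \<Longrightarrow> f i \<noteq> 0"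
  shows "order z (\<Prod>i\<in>S. f i) = (\<Sum>i\<in>S. order z (f i))"
  using assms by (induction S rule: finite_induct) (auto simp: order_mult)

lemma order_power: "(p :: 'a::idom poly) \<noteq> 0 \<Longrightarrow> order z (p ^ n) = n * order z p"
  by (induction n) (auto simp: order_mult)

text \<open>The roots of \<open>geom_poly m\<close> are the \<open>m\<close>-th roots of unity other than 1, all simple
  because \<open>1 - X\<^sup>m\<close> is squarefree.\<close>
lemma order_geom_poly:
  fixes z :: "'a::field_char_0"
  assumes "m \<ge> 1"
  shows "order z (geom_poly m) = (if z \<noteq> 1 \<and> z ^ m = 1 then 1 else 0)"
proof -
  define p where "p = (1 - monom 1 m :: 'a poly)"
  have eval: "(1 - z) * poly (geom_poly m) z = 1 - z ^ m"
    using arg_cong[OF one_minus_X_mult_geom_poly[of m], of "\<lambda>p. poly p z"] by (simp add: poly_monom algebra_simps)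
  have "geom_poly m \<noteq> (0 :: 'a poly)"
    using assms by (simp add: geom_poly_eq_0_iff)
  have "poly p 0 \<noteq> 0"
    using assms by (simp add: p_def poly_monom power_0_left)
  then have "p \<noteq> 0" by auto
  have "rsquarefree p"
    unfolding rsquarefree_roots
  proof (intro allI notI)
    fix x assume root: "poly p x = 0 \<and> poly (pderiv p) x = 0"
    then have "x ^ (m - 1) = 0"
      using assms by (simp add: p_def pderiv_diff pderiv_monom poly_monom)
    with root assms show False
      by (simp add: p_def poly_monom power_0_left)
  qed
  then have "order z p \<le> 1"
    unfolding rsquarefree_def by (metis le_refl zero_le)
  moreover have "geom_poly m dvd p"
    unfolding p_def one_minus_X_mult_geom_poly[symmetric] by (rule dvd_triv_right)
  then have "order z (geom_poly m) \<le> order z p"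
    by (rule dvd_imp_order_le[OF \<open>p \<noteq> 0\<close>])
  ultimately have "order z (geom_poly m) \<le> 1" by simp
  moreover have "order z (geom_poly m) \<noteq> 0 \<longleftrightarrow> z \<noteq> 1 \<and> z ^ m = 1"
    using order_root[of "geom_poly m" z] \<open>geom_poly m \<noteq> 0\<close> eval assms
    by (cases "z = 1") (auto simp: poly_geom_poly_1)
  ultimately show ?thesis by auto
qed

lemma order_geom_prod_poly:
  fixes z :: "'a::field_char_0"
  assumes "\<forall>i\<ge>1. 0 < a i"
  shows "order z (geom_prod_poly a k) = card {i\<in>{1..k}. z \<noteq> 1 \<and> z ^ a i = 1}"
proof -
  have "order z (geom_prod_poly a k) = (\<Sum>i\<in>{1..k}. if z \<noteq> 1 \<and> z ^ a i = 1 then 1 else 0)"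
    using assms unfolding geom_prod_poly_def
    by (subst order_prod) (auto simp: geom_poly_eq_0_iff order_geom_poly Suc_le_eq intro!: sum.cong)
  then show ?thesis
    using sum.inter_filter[of "{1..k}" "\<lambda>_. 1 :: nat" "\<lambda>i. z \<noteq> 1 \<and> z ^ a i = 1"] by simp
qed

lemma power_Gcd_eq_1:
  fixes z :: "'a::monoid_mult"
  assumes "finite S" "\<And>x. x \<in> S \<Longrightarrow> z ^ x = 1"
  shows "z ^ Gcd S = 1"
  using assms
proof (induction S rule: finite_induct)
  case (insert x S)
  then have "z ^ x = 1" "z ^ Gcd S = 1" by auto
  show ?case
  proof (cases "x = 0")
    case False
    then obtain u v where uv: "x * u = Gcd S * v + gcd x (Gcd S)"
      using bezout_nat by blast
    have "1 = z ^ (x * u)" by (simp add: power_mult \<open>z ^ x = 1\<close>)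
    also have "\<dots> = z ^ gcd x (Gcd S)"
      by (simp add: uv power_add power_mult \<open>z ^ Gcd S = 1\<close>)
    finally show ?thesis by simp
  qed (simp add: \<open>z ^ Gcd S = 1\<close>)
qed simp

lemma card_power_eq_1_less:
  fixes z :: "'a::monoid_mult"
  assumes gcd: "\<forall>S. S \<subseteq> {1..k} \<and> card S = t \<longrightarrow> Gcd (a ` S) = 1" and "z \<noteq> 1"
  shows "card {i\<in>{1..k}. z ^ a i = 1} < t"
proof (rule ccontr)
  assume "\<not> ?thesis"
  then obtain S where S: "S \<subseteq> {i\<in>{1..k}. z ^ a i = 1}" "card S = t" "finite S"
    by (metis (no_types, lifting) not_less obtain_subset_with_card_n)
  moreover have "S \<subseteq> {1..k}" using S(1) by auto
  ultimately have "Gcd (a ` S) = 1" using gcd by blast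
  moreover have "z ^ Gcd (a ` S) = 1" using S by (intro power_Gcd_eq_1) auto
  ultimately show False using \<open>z \<noteq> 1\<close> by simp
qed

text \<open>Compare root multiplicities over \<open>\<complex>\<close>: a root \<open>z \<noteq> 1\<close> of the left side has \<open>z ^ a i = 1\<close> for
  some \<open>i\<close>, hence \<open>z ^ M = 1\<close> and multiplicity \<open>t - 1\<close> on the right; on the left its multiplicity
  is the number of such \<open>i\<close>, which the gcd condition keeps below \<open>t\<close>.\<close>
lemma geom_prod_poly_dvd:
  assumes pos: "\<forall>i\<ge>1. 0 < a i"
    and gcd: "\<forall>S. S \<subseteq> {1..k} \<and> card S = t \<longrightarrow> Gcd (a ` S) = 1"
  shows "geom_prod_poly a k dvd (geom_poly (\<Prod>i\<in>{1..k}. a i) ^ (t - 1) :: real poly)"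
proof (rule map_poly_of_real_dvd_imp_dvd[where 'a = complex])
  define M where "M = (\<Prod>i\<in>{1..k}. a i)"
  have "M \<ge> 1" using pos by (simp add: M_def Suc_le_eq prod_pos)
  show "geom_prod_poly a k \<noteq> (0 :: real poly)"
    using pos by (auto simp: geom_prod_poly_def geom_poly_eq_0_iff)
  have "map_poly of_real (geom_prod_poly a k) = (geom_prod_poly a k :: complex poly)"
    by (simp add: geom_prod_poly_def map_poly_of_real_prod map_poly_of_real_geom_poly)
  moreover have "map_poly of_real (geom_poly M ^ (t - 1)) = (geom_poly M ^ (t - 1) :: complex poly)"
    by (simp add: map_poly_of_real_power map_poly_of_real_geom_poly)
  moreover have "geom_prod_poly a k dvd (geom_poly M ^ (t - 1) :: complex poly)"
  proof (rule dvd_if_order_le)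
    show "geom_prod_poly a k \<noteq> (0 :: complex poly)" "geom_poly M ^ (t - 1) \<noteq> (0 :: complex poly)"
      using pos \<open>M \<ge> 1\<close> by (auto simp: geom_prod_poly_def geom_poly_eq_0_iff)
    fix z :: complex
    show "order z (geom_prod_poly a k) \<le> order z (geom_poly M ^ (t - 1))"
    proof (cases "\<exists>i\<in>{1..k}. z \<noteq> 1 \<and> z ^ a i = 1")
      case True
      then obtain i where "i \<in> {1..k}" "z \<noteq> 1" "z ^ a i = 1" by blast
      moreover have "a i dvd M"
        unfolding M_def using \<open>i \<in> {1..k}\<close> by (intro dvd_prodI) auto
      ultimately have "z ^ M = 1"
        by (metis dvdE power_mult power_one)
      then have "order z (geom_poly M ^ (t - 1)) = t - 1"
        using \<open>M \<ge> 1\<close> \<open>z \<noteq> 1\<close> by (simp add: order_power geom_poly_eq_0_iff order_geom_poly)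
      moreover have "card {i\<in>{1..k}. z ^ a i = 1} < t"
        using card_power_eq_1_less[OF gcd \<open>z \<noteq> 1\<close>] .
      ultimately show ?thesis
        using pos \<open>z \<noteq> 1\<close> by (simp add: order_geom_prod_poly)
    next
      case False
      then have "{i\<in>{1..k}. z \<noteq> 1 \<and> z ^ a i = 1} = {}" by blast
      then show ?thesis
        by (simp only: order_geom_prod_poly[OF pos]) simp
    qed
  qed
  ultimately show "map_poly of_real (geom_prod_poly a k) dvd (map_poly of_real (geom_poly M ^ (t - 1)) :: complex poly)"
    by simp
qed

lemma fps_inverse_one_minus_X_power:
  assumes "M \<ge> 1"
  shows "inverse (1 - fps_X ^ M :: 'a::field fps) = Abs_fps (\<lambda>n. if M dvd n then 1 else 0)"
proof (rule fps_inverse_unique, rule fps_ext)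
  fix n
  have "M dvd n \<longleftrightarrow> n = 0" if "n < M"
    using that assms by (auto dest: dvd_imp_le)
  moreover have "M dvd n \<longleftrightarrow> M dvd (n - M)" if "\<not> n < M"
    using that by (simp add: dvd_minus_self)
  ultimately show "((1 - fps_X ^ M) * Abs_fps (\<lambda>n. if M dvd n then 1 else 0 :: 'a)) $ n = (1 :: 'a fps) $ n"
    using assms by (cases "n < M") (simp_all add: algebra_simps fps_X_power_mult_nth)
qed

lemma abs_fps_mult_nth_le:
  fixes f g :: "real fps"
  assumes "\<And>n. \<bar>f $ n\<bar> \<le> C" and "\<And>n. \<bar>g $ n\<bar> \<le> (real n + 1) ^ m"
  shows "\<bar>(f * g) $ n\<bar> \<le> C * (real n + 1) ^ Suc m"
proof -
  have "\<bar>(f * g) $ n\<bar> \<le> (\<Sum>i=0..n. \<bar>f $ i\<bar> * \<bar>g $ (n - i)\<bar>)"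
    unfolding fps_mult_nth abs_mult[symmetric] by (rule sum_abs)
  also have "\<dots> \<le> (\<Sum>i=0..n. C * (real n + 1) ^ m)"
  proof (rule sum_mono)
    fix i assume "i \<in> {0..n}"
    have "\<bar>g $ (n - i)\<bar> \<le> (real n + 1) ^ m"
      using assms(2)[of "n - i"] by (rule order.trans) (intro power_mono, auto)
    then show "\<bar>f $ i\<bar> * \<bar>g $ (n - i)\<bar> \<le> C * (real n + 1) ^ m"
      using assms(1)[of i] by (intro mult_mono) auto
  qed
  also have "\<dots> = C * (real n + 1) ^ Suc m" by simp
  finally show ?thesis .
qed

lemma abs_inverse_one_minus_X_power_power_nth_le:
  assumes "M \<ge> 1" "s \<ge> 1"
  shows "\<bar>inverse ((1 - fps_X ^ M :: real fps) ^ s) $ n\<bar> \<le> (real n + 1) ^ (s - 1)"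
proof -
  have bound: "\<bar>inverse (1 - fps_X ^ M :: real fps) $ n\<bar> \<le> 1" for n
    unfolding fps_inverse_one_minus_X_power[OF assms(1)] by simp
  show ?thesis
    using assms(2)
  proof (induction s arbitrary: n rule: dec_induct)
    case base
    then show ?case using bound by simp
  next
    case (step s)
    from abs_fps_mult_nth_le[OF bound step.IH]
    show ?case
      using step.hyps by (simp add: fps_inverse_mult Suc_diff_le)
  qed
qed

lemma abs_fps_of_poly_mult_nth_le:
  fixes g :: "real fps"
  assumes "\<And>n. \<bar>g $ n\<bar> \<le> (real n + 1) ^ m"
  shows "\<bar>(fps_of_poly P * g) $ n\<bar> \<le> (\<Sum>i\<le>degree P. \<bar>coeff P i\<bar>) * (real n + 1) ^ m"
proof -
  have "\<bar>(fps_of_poly P * g) $ n\<bar> \<le> (\<Sum>i=0..n. \<bar>coeff P i\<bar> * \<bar>g $ (n - i)\<bar>)"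
    unfolding fps_mult_nth by (simp add: sum_abs flip: abs_mult)
  also have "\<dots> \<le> (\<Sum>i\<in>{0..n}. \<bar>coeff P i\<bar> * (real n + 1) ^ m)"
  proof (rule sum_mono)
    fix i assume "i \<in> {0..n}"
    have "\<bar>g $ (n - i)\<bar> \<le> (real n + 1) ^ m"
      using assms[of "n - i"] by (rule order.trans) (intro power_mono, auto)
    then show "\<bar>coeff P i\<bar> * \<bar>g $ (n - i)\<bar> \<le> \<bar>coeff P i\<bar> * (real n + 1) ^ m"
      by (simp add: mult_left_mono)
  qed
  also have "\<dots> = (\<Sum>i\<in>{0..n} \<inter> {..degree P}. \<bar>coeff P i\<bar>) * (real n + 1) ^ m"
    by (subst sum.mono_neutral_right[of "{0..n}"]) (auto simp: coeff_eq_0 sum_distrib_right)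
  also have "\<dots> \<le> (\<Sum>i\<le>degree P. \<bar>coeff P i\<bar>) * (real n + 1) ^ m"
    by (intro mult_right_mono sum_mono2) auto
  finally show ?thesis .
qed

lemma bigo_powr_if_bounded:
  assumes "\<And>n. \<bar>f n\<bar> \<le> C * (real n + 1) ^ m"
  shows "f \<in> O(\<lambda>n. real n powr real m)"
proof -
  have "f \<in> O(\<lambda>n. (real n + 1) powr real m)"
    by (rule bigoI[where c = C]) (use assms in \<open>simp add: powr_realpow\<close>)
  also have "(\<lambda>n. (real n + 1) powr real m) \<in> O(\<lambda>n. real n powr real m)"
    by real_asymp
  finally show ?thesis .
qed

text \<open>If \<open>U\<close> divides \<open>(1 - X\<^sup>M)\<^sup>s\<close>, then \<open>B / U = B W / (1 - X\<^sup>M)\<^sup>s\<close>, whose coefficients are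
  convolutions of those of \<open>B W\<close> with coefficients of size \<open>O(n\<^sup>s\<^sup>-\<^sup>1)\<close>.\<close>
lemma fps_div_poly_nth_bigo:
  fixes B U :: "real poly"
  assumes "U dvd (1 - monom 1 M) ^ s" "M \<ge> 1"
  shows "(\<lambda>n. (fps_of_poly B * inverse (fps_of_poly U)) $ n) \<in> O(\<lambda>n. real n powr (real s - 1))"
proof -
  obtain W where W: "(1 - monom 1 M) ^ s = U * W"
    using assms(1) by blast
  define Uf Wf where "Uf = fps_of_poly U" and "Wf = fps_of_poly W"
  have UW: "(1 - fps_X ^ M :: real fps) ^ s = Uf * Wf"
    using arg_cong[OF W, of fps_of_poly]
    by (simp add: Uf_def Wf_def fps_of_poly_power fps_of_poly_diff fps_of_poly_monom' fps_of_poly_mult)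
  have "(Uf * Wf) $ 0 = 1"
    unfolding UW[symmetric] using assms(2) by (simp add: fps_nth_power_0 power_0_left)
  then have "Wf $ 0 \<noteq> 0" by auto
  then have "inverse Uf = Wf * inverse ((1 - fps_X ^ M) ^ s)"
    by (simp add: UW fps_inverse_mult mult.left_commute inverse_mult_eq_1')
  then have split: "fps_of_poly B * inverse Uf = fps_of_poly (B * W) * inverse ((1 - fps_X ^ M) ^ s)"
    by (simp add: Wf_def fps_of_poly_mult mult.assoc)
  show ?thesis
  proof (cases "s = 0")
    case True
    have "eventually (\<lambda>n. (fps_of_poly B * inverse Uf) $ n = 0) sequentially"
      using eventually_gt_at_top[of "degree (B * W)"]
      by (rule eventually_mono) (simp add: split True coeff_eq_0)
    then show ?thesis
      by (simp add: Uf_def landau_o.big.in_cong[where g = "\<lambda>_. 0"])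
  next
    case False
    have "\<bar>(fps_of_poly B * inverse Uf) $ n\<bar> \<le> (\<Sum>i\<le>degree (B * W). \<bar>coeff (B * W) i\<bar>) * (real n + 1) ^ (s - 1)" for n
      unfolding split
      by (intro abs_fps_of_poly_mult_nth_le abs_inverse_one_minus_X_power_power_nth_le) (use assms(2) False in auto)
    then have "(\<lambda>n. (fps_of_poly B * inverse Uf) $ n) \<in> O(\<lambda>n. real n powr real (s - 1))"
      by (rule bigo_powr_if_bounded)
    then show ?thesis
      using False by (simp add: Uf_def of_nat_diff)
  qed
qed

lemma p_A_partial_fractions:
  assumes pos: "\<forall>i\<ge>1. 0 < a i" and "k \<ge> 1"
  obtains A B :: "real poly" where "poly A 1 > 0"
    and "\<And>n. p_A a k n = (fps_of_poly A * inverse ((1 - fps_X) ^ k)) $ n +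
      (fps_of_poly B * inverse (fps_of_poly (geom_prod_poly a k))) $ n"
proof -
  define U where "U = (geom_prod_poly a k :: real poly)"
  have "poly U 1 = (\<Prod>i\<in>{1..k}. real (a i))"
    by (simp add: U_def geom_prod_poly_def poly_prod poly_geom_poly_1)
  also have "\<dots> > 0"
    using pos by (intro prod_pos) auto
  finally have "poly U 1 > 0" .
  have "poly U 0 \<noteq> 0"
    using pos by (simp add: U_def geom_prod_poly_def poly_prod poly_geom_poly_0)
  have "prime_elem ([:1, -1:] :: real poly)"
    by (rule prime_elem_linear_field_poly) simp
  moreover have "\<not> [:1, -1:] dvd U"
    using \<open>poly U 1 > 0\<close> by (auto elim!: dvdE)
  ultimately have "coprime U ([:1, -1:] ^ k)"
    by (rule prime_elem_imp_power_coprime)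
  then obtain A B where bezout: "A * U + B * [:1, -1:] ^ k = 1"
    by (metis bezout_coefficients_fst_snd coprime_iff_gcd_eq_1)
  have "poly (A * U + B * [:1, -1:] ^ k) 1 = 1"
    by (simp only: bezout) simp
  then have "poly A 1 * poly U 1 = 1"
    using \<open>k \<ge> 1\<close> by (simp add: power_0_left)
  then have "poly A 1 > 0"
    using \<open>poly U 1 > 0\<close> by (metis zero_less_mult_pos2 zero_less_one)
  moreover have "p_A a k n = (fps_of_poly A * inverse ((1 - fps_X) ^ k)) $ n +
      (fps_of_poly B * inverse (fps_of_poly U)) $ n" for n
  proof -
    have X: "fps_of_poly ([:1, -1:] ^ k) = (1 - fps_X :: real fps) ^ k"
      by (simp add: fps_of_poly_power fps_of_poly_pCons fps_of_poly_diff)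
    have "poly ([:1, -1:] ^ k) 0 \<noteq> (0 :: real)" by simp
    from fps_inverse_partial_fractions[OF bezout this \<open>poly U 0 \<noteq> 0\<close>]
    show ?thesis
      unfolding p_A_def p_A_fps_eq U_def[symmetric] X by simp
  qed
  ultimately show ?thesis
    using that by (simp add: U_def)
qed

lemma p_A_poly_approx:
  assumes pos: "\<forall>i\<ge>1. 0 < a i" and "k \<ge> 1" "t \<ge> 1"
    and gcd: "\<forall>S. S \<subseteq> {1..k} \<and> card S = t \<longrightarrow> Gcd (a ` S) = 1"
  shows "\<exists>q. degree q = k - 1 \<and> lead_coeff q > 0 \<and> poly_approx (p_A a k) q (real t - 2)"
proof -
  define U where "U = (geom_prod_poly a k :: real poly)"
  define M where "M = (\<Prod>i\<in>{1..k}. a i)"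
  obtain A B where "poly A 1 > 0" and p_A: "\<And>n. p_A a k n =
      (fps_of_poly A * inverse ((1 - fps_X) ^ k)) $ n + (fps_of_poly B * inverse (fps_of_poly U)) $ n"
    using p_A_partial_fractions[OF pos \<open>k \<ge> 1\<close>] unfolding U_def by metis
  obtain q where deg: "degree q \<le> k - 1" and top: "coeff q (k - 1) = poly A 1 / fact (k - 1)"
    and main: "\<And>n. n \<ge> degree A \<Longrightarrow> (fps_of_poly A * inverse ((1 - fps_X) ^ k)) $ n = poly q (real n)"
    using fps_div_one_minus_X_power_eventually_poly[OF \<open>k \<ge> 1\<close>] by metis
  have "coeff q (k - 1) > 0"
    using top \<open>poly A 1 > 0\<close> by simp
  then have "degree q = k - 1"
    using deg le_degree by (metis le_antisym less_irrefl)
  have "U dvd geom_poly M ^ (t - 1)"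
    using geom_prod_poly_dvd[OF pos gcd] by (simp add: U_def M_def)
  also have "\<dots> dvd (1 - monom 1 M) ^ (t - 1)"
    unfolding one_minus_X_mult_geom_poly[symmetric] power_mult_distrib by (rule dvd_triv_right)
  finally have "(\<lambda>n. (fps_of_poly B * inverse (fps_of_poly U)) $ n) \<in> O(\<lambda>n. real n powr (real (t - 1) - 1))"
    by (rule fps_div_poly_nth_bigo) (use pos in \<open>simp add: M_def Suc_le_eq prod_pos\<close>)
  moreover have "eventually (\<lambda>n. p_A a k n - poly q (real n) =
      (fps_of_poly B * inverse (fps_of_poly U)) $ n) sequentially"
    using eventually_ge_at_top[of "degree A"] by (rule eventually_mono) (simp add: p_A main)
  ultimately have "poly_approx (p_A a k) q (real t - 2)"
    unfolding poly_approx_def using \<open>t \<ge> 1\<close> by (simp add: landau_o.big.in_cong of_nat_diff)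
  then show ?thesis
    using \<open>degree q = k - 1\<close> \<open>coeff q (k - 1) > 0\<close> by auto
qed

theorem theorem4p7:
  fixes a :: "nat \<Rightarrow> nat" and r k :: nat
  assumes pos: "\<forall>i\<ge>1. 0 < a i"
    and incr: "\<forall>i\<ge>1. a i \<le> a (Suc i)"
    and r_pos: "0 < r"
    and k_gt: "k > 2 * r"
    and gcd_cond: "\<forall>S. S \<subseteq> {1..k} \<and> card S = k - 2 * r \<longrightarrow> Gcd (a ` S) = 1"
  shows "asymp_r_log_concave r (p_A a k)"
proof -
  have "k \<ge> 1" "k - 2 * r \<ge> 1"
    using k_gt by auto
  then obtain q where "degree q = k - 1" "lead_coeff q > 0"
    and "poly_approx (p_A a k) q (real (k - 2 * r) - 2)"
    using p_A_poly_approx[OF pos _ _ gcd_cond] by blast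
  moreover have "real (k - 2 * r) - 2 = real (k - 1) - real (2 * r + 1)"
    using k_gt by (simp add: of_nat_diff)
  ultimately show ?thesis
    using r_pos k_gt by (intro asymp_r_log_concave_if_poly_approx[of _ q "real (2 * r + 1)"]) auto
qed

end
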